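(* If $S$ is a simply-connected shape in the triangular grid with at least two points, then $S$ has at least one strictly convex and erodable (SCE) point with respect to $S$.
   Context: The triangular grid $G$ has as vertices ("points") the points of the regular triangular lattice in the plane, two points adjacent iff at unit distance; each point has six incident edges, cyclically ordered clockwise. A shape is a finite set of points, identified with its induced subgraph. A connected shape $S$ partitions the plane into faces; the unique unbounded one is the outer face, and a bounded face containing a grid point not in $S$ is a hole. $S$ is simply-connected if it is connected and has no holes. The outer boundary of $S$ is the set of points of $S$ lying on the boundary of the outer face. A boundary point of $S$ is a point of $S$ adjacent to some point not in $S$. For a boundary point $v$, a local boundary $B$ of $v$ (w.r.t. $S$) is a maximal clockwise cyclic interval of consecutive edges incident to $v$ whose other endpoints are not in $S$; $|B|$ is its number of edges, and the boundary count of $v$ w.r.t. $B$ is $c(v,B)=|B|-2$. $v$ is strictly convex w.r.t. $B$ if $c(v,B)>0$. A point $v \in S$ is redundant if the subgraph induced by the neighbors of $v$ in $S$ is connected; it is erodable w.r.t. $S$ if it is redundant and on the outer boundary of $S$ (such a point has a single local boundary $B$). An erodable point that is strictly convex w.r.t. its single local boundary is called strictly convex and erodable (SCE) w.r.t. $S$. *)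

theory Defs
  imports "HOL-Analysis.Analysis"
begin

text \<open>The lattice is generated
by 1 and omega = exp(i pi/3); the six unit vectors omega^k (k = 0..5) are the six
directions around a point, in counterclockwise order (so clockwise order is decreasing k).\<close>

definition omega :: complex where
  "omega = cis (pi / 3)"

definition tri_points :: "complex set" where
  "tri_points = {of_int a + of_int b * omega | a b. True}"

definition tri_adj :: "complex \<Rightarrow> complex \<Rightarrow> bool" where
  "tri_adj u v \<longleftrightarrow> u \<in> tri_points \<and> v \<in> tri_points \<and> dist u v = 1"

definition shape :: "complex set \<Rightarrow> bool" where
  "shape S \<longleftrightarrow> finite S \<and> S \<subseteq> tri_points"

definition induced_connected :: "complex set \<Rightarrow> bool" where
  "induced_connected A \<longleftrightarrow>
     (\<forall>x\<in>A. \<forall>y\<in>A. (x, y) \<in> {(u, v). u \<in> A \<and> v \<in> A \<and> tri_adj u v}\<^sup>*)"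

definition drawing :: "complex set \<Rightarrow> complex set" where
  "drawing S = S \<union> \<Union>{closed_segment u v | u v. u \<in> S \<and> v \<in> S \<and> tri_adj u v}"

definition faces :: "complex set \<Rightarrow> complex set set" where
  "faces S = components (- drawing S)"

definition is_outer_face :: "complex set \<Rightarrow> complex set \<Rightarrow> bool" where
  "is_outer_face S F \<longleftrightarrow> F \<in> faces S \<and> \<not> bounded F"

definition is_hole :: "complex set \<Rightarrow> complex set \<Rightarrow> bool" where
  "is_hole S F \<longleftrightarrow> F \<in> faces S \<and> bounded F \<and> (\<exists>p \<in> tri_points - S. p \<in> F)"

definition simply_connected_shape :: "complex set \<Rightarrow> bool" where
  "simply_connected_shape S \<longleftrightarrow>
     shape S \<and> induced_connected S \<and> \<not> (\<exists>F. is_hole S F)"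

definition outer_boundary :: "complex set \<Rightarrow> complex set" where
  "outer_boundary S = {v \<in> S. \<exists>F. is_outer_face S F \<and> v \<in> frontier F}"

text \<open>An edge incident to v is identified by its direction index
k < 6 (the edge from v to v + omega^k).  A local boundary is a maximal cyclic interval
of consecutive directions whose other endpoints are not in S.\<close>
definition cyc_interval :: "nat \<Rightarrow> nat \<Rightarrow> nat set" where
  "cyc_interval i m = {(i + j) mod 6 | j. j < m}"

definition out_dirs :: "complex set \<Rightarrow> complex \<Rightarrow> nat set" where
  "out_dirs S v = {k. k < 6 \<and> v + omega ^ k \<notin> S}"

definition local_boundary :: "complex set \<Rightarrow> complex \<Rightarrow> nat set \<Rightarrow> bool" where
  "local_boundary S v B \<longleftrightarrow>
     v \<in> S \<and>
     (\<exists>i m. i < 6 \<and> 0 < m \<and> m \<le> 6 \<and> B = cyc_interval i m) \<and>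
     B \<subseteq> out_dirs S v \<and>
     (\<forall>i m. i < 6 \<and> m \<le> 6 \<and> B \<subset> cyc_interval i m \<longrightarrow> \<not> cyc_interval i m \<subseteq> out_dirs S v)"

definition boundary_count :: "nat set \<Rightarrow> int" where
  "boundary_count B = int (card B) - 2"

definition redundant :: "complex set \<Rightarrow> complex \<Rightarrow> bool" where
  "redundant S v \<longleftrightarrow> v \<in> S \<and> induced_connected {u \<in> S. tri_adj v u}"

definition erodable :: "complex set \<Rightarrow> complex \<Rightarrow> bool" where
  "erodable S v \<longleftrightarrow> redundant S v \<and> v \<in> outer_boundary S"

definition sce :: "complex set \<Rightarrow> complex \<Rightarrow> bool" where
  "sce S v \<longleftrightarrow> erodable S v \<and> (\<exists>B. local_boundary S v B \<and> boundary_count B > 0)"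

end

theory Submission
  imports Defs "HOL-Complex_Analysis.Winding_Numbers"
begin

text \<open>Call v an arc point of S if its neighbours in S occupy one, two or three cyclically
consecutive directions.  In a simply connected shape an arc point is strictly convex and
erodable: its neighbours form a path, its missing directions form a single local boundary with
at least three edges, and a point with a missing neighbour lies on the outer boundary, since the
face containing that neighbour is not a hole.

A point of S with largest real part has all its neighbours among the directions 2, 3, 4, so it
is an arc point unless its neighbours are exactly those in the directions 2 and 4; likewise for
a point with least real part and the directions 5, 0, 1.  In the exceptional case the two
neighbours lie in different components of S - {v}: a path joining them, closed up through v,
would wind around one of the two missing neighbours in the directions 3 and 0, which would then
lie in a hole.  Each branch together with v is a smaller shape of the same kind, and by
induction has two arc points, one of them other than v; these are arc points of S.  So S has
two distinct arc points.\<close>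

section \<open>The triangular lattice\<close>

lemma omega_eq: "omega = Complex (1/2) (sqrt 3 / 2)"
  by (simp add: omega_def complex_eq_iff cos_60 sin_60)

lemma Re_omega [simp]: "Re omega = 1/2" and Im_omega [simp]: "Im omega = sqrt 3 / 2"
  by (simp_all add: omega_eq)

lemma omega_squared: "omega^2 = omega - 1"
  by (simp add: omega_eq complex_eq_iff power2_eq_square field_simps)

lemma omega_cube: "omega^3 = -1"
  by (simp add: omega_eq complex_eq_iff power3_eq_cube field_simps)

lemma omega_pow_add_3: "omega^(k + 3) = - (omega^k)"
  by (simp add: power_add omega_cube)

lemma omega_pow_6: "omega^6 = 1"
  using omega_pow_add_3[of 3] by (simp add: omega_cube)

lemma omega_pow_mod_6: "omega^(k mod 6) = omega^k"
proof -
  have "omega^k = (omega^6)^(k div 6) * omega^(k mod 6)"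
    by (metis div_mult_mod_eq power_add power_mult mult.commute)
  then show ?thesis by (simp add: omega_pow_6)
qed

lemma omega_pow_values:
  "omega^0 = 1" "omega^1 = omega" "omega^2 = omega - 1"
  "omega^3 = -1" "omega^4 = - omega" "omega^5 = 1 - omega"
  using omega_pow_add_3[of 1] omega_pow_add_3[of 2] by (simp_all add: omega_squared omega_cube)

lemma cnj_omega: "cnj omega = omega^5"
  unfolding omega_pow_values by (simp add: complex_eq_iff)

lemma norm_omega_pow [simp]: "cmod (omega^k) = 1"
  by (simp add: omega_def norm_power)

lemma omega_nonzero [simp]: "omega \<noteq> 0"
  by (simp add: omega_eq complex_eq_iff)

lemma omega_pow_nonzero [simp]: "omega^k \<noteq> 0"
  using norm_omega_pow[of k] by (metis norm_zero zero_neq_one)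

lemma omega_pow_add_2_neq: "omega^(a + 2) \<noteq> omega^a"
proof
  assume "omega^(a + 2) = omega^a"
  then have "omega^a * omega^2 = omega^a * 1" by (simp only: power_add mult_1_right)
  then have "omega^2 = 1" by (simp only: mult_left_cancel[OF omega_pow_nonzero])
  then have "omega - 1 = 1" by (simp only: omega_squared)
  then show False by (simp add: omega_eq complex_eq_iff)
qed

lemma wedge_directions:
  "omega^(a + 1) * omega = omega^(a + 2)" "omega^(a + 1) * cnj omega = omega^a"
  "v - omega^(a + 1) = v + omega^(a + 4)"
proof -
  show "omega^(a + 1) * omega = omega^(a + 2)"
    unfolding power_Suc2[symmetric] by simp
  have "omega^(a + 1) * cnj omega = omega^a * omega^6"
    unfolding cnj_omega power_add[symmetric] by (simp add: add.commute)
  then show "omega^(a + 1) * cnj omega = omega^a" by (simp add: omega_pow_6)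
  have "a + 4 = (a + 1) + 3" by simp
  then show "v - omega^(a + 1) = v + omega^(a + 4)"
    by (simp only: omega_pow_add_3) simp
qed

definition lat :: "real \<Rightarrow> real \<Rightarrow> complex" where
  "lat a b = of_real a + of_real b * omega"

lemma Re_lat [simp]: "Re (lat a b) = a + b / 2" and Im_lat [simp]: "Im (lat a b) = b * sqrt 3 / 2"
  by (simp_all add: lat_def)

lemma lat_eq_iff: "lat a b = lat c d \<longleftrightarrow> a = c \<and> b = d"
  by (auto simp: complex_eq_iff)

lemma lat_add: "lat a b + lat c d = lat (a + c) (b + d)"
  by (simp add: lat_def algebra_simps)

lemma lat_diff: "lat a b - lat c d = lat (a - c) (b - d)"
  by (simp add: lat_def algebra_simps)

lemma lat_scale: "of_real s * lat a b = lat (s * a) (s * b)"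
  by (simp add: lat_def algebra_simps)

lemma lat_mult_omega: "lat a b * omega = lat (- b) (a + b)"
proof -
  have "lat a b * omega = of_real a * omega + of_real b * omega^2"
    by (simp add: lat_def power2_eq_square algebra_simps)
  then show ?thesis by (simp add: omega_squared lat_def algebra_simps)
qed

lemma tri_points_iff: "z \<in> tri_points \<longleftrightarrow> (\<exists>(p::int) (q::int). z = lat p q)"
  by (auto simp: tri_points_def lat_def)

lemma tri_points_add:
  assumes "z \<in> tri_points" "w \<in> tri_points" shows "z + w \<in> tri_points"
proof -
  obtain p q p' q' :: int where "z = lat p q" "w = lat p' q'"
    using assms by (auto simp: tri_points_iff)
  then have "z + w = lat (of_int (p + p')) (of_int (q + q'))" by (simp add: lat_add)
  then show ?thesis unfolding tri_points_iff by blast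
qed

lemma tri_points_diff:
  assumes "z \<in> tri_points" "w \<in> tri_points" shows "z - w \<in> tri_points"
proof -
  obtain p q p' q' :: int where "z = lat p q" "w = lat p' q'"
    using assms by (auto simp: tri_points_iff)
  then have "z - w = lat (of_int (p - p')) (of_int (q - q'))" by (simp add: lat_diff)
  then show ?thesis unfolding tri_points_iff by blast
qed

lemma tri_points_mult_omega_pow: "z \<in> tri_points \<Longrightarrow> z * omega^n \<in> tri_points"
proof (induction n)
  case (Suc n)
  then obtain p q :: int where "z * omega^n = lat p q" by (auto simp: tri_points_iff)
  moreover have "z * omega^Suc n = (z * omega^n) * omega" by (simp add: algebra_simps)
  ultimately have "z * omega^Suc n = lat (of_int (- q)) (of_int (p + q))"
    by (simp add: lat_mult_omega)
  then show ?case unfolding tri_points_iff by blast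
qed simp

definition eisenstein_units :: "(int \<times> int) set" where
  "eisenstein_units = {(1, 0), (0, 1), (-1, 1), (-1, 0), (0, -1), (1, -1)}"

lemma omega_pow_unit_coords:
  obtains p q where "(p, q) \<in> eisenstein_units" "omega^k = lat (of_int p) (of_int q)"
proof -
  have "k mod 6 \<in> {0, 1, 2, 3, 4, 5}" by auto
  then show ?thesis
    using omega_pow_mod_6[of k] that[of 1 0] that[of 0 1] that[of "-1" 1] that[of "-1" 0]
      that[of 0 "-1"] that[of 1 "-1"]
    by (auto simp: eisenstein_units_def omega_pow_values lat_def)
qed

lemma unit_coords_omega_pow: "(p, q) \<in> eisenstein_units \<Longrightarrow> \<exists>k<6. lat p q = omega^k"
  unfolding eisenstein_units_def
  by (auto simp: lat_def omega_pow_values intro: exI[of _ 0] exI[of _ 1] exI[of _ 2]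
      exI[of _ 3] exI[of _ 4] exI[of _ 5])

lemma norm_form_eq_1_iff:
  fixes p q :: int
  shows "p * p + p * q + q * q = 1 \<longleftrightarrow> (p, q) \<in> eisenstein_units"
proof
  assume e: "p * p + p * q + q * q = 1"
  have "(2 * p + q)^2 + 3 * q^2 = 4" "(2 * q + p)^2 + 3 * p^2 = 4"
    using e by (simp_all add: power2_eq_square algebra_simps)
  then have "q^2 \<le> 1" "p^2 \<le> 1"
    by (smt (verit) zero_le_power2)+
  then have "\<bar>p\<bar> \<le> 1" "\<bar>q\<bar> \<le> 1" by (simp_all add: abs_square_le_1)
  then have "p \<in> {-1, 0, 1}" "q \<in> {-1, 0, 1}" by auto
  then show "(p, q) \<in> eisenstein_units" using e by (auto simp: eisenstein_units_def)
qed (auto simp: eisenstein_units_def)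

lemma tri_points_omega_pow: "omega^k \<in> tri_points"
  by (metis omega_pow_unit_coords tri_points_iff)

lemma norm_lat_squared: "(cmod (lat a b))^2 = a * a + a * b + b * b"
  unfolding cmod_power2 by (simp add: power2_eq_square field_simps)

lemma tri_adj_iff:
  assumes "v \<in> tri_points"
  shows "tri_adj v u \<longleftrightarrow> (\<exists>k<6. u = v + omega^k)"
proof
  assume "tri_adj v u"
  then have u: "u \<in> tri_points" and "cmod (u - v) = 1"
    by (auto simp: tri_adj_def dist_norm norm_minus_commute)
  obtain p q :: int where pq: "u - v = lat p q"
    using tri_points_diff[OF u assms] by (auto simp: tri_points_iff)
  have "real_of_int (p * p + p * q + q * q) = 1"
    using norm_lat_squared[of p q] \<open>cmod (u - v) = 1\<close> by (simp add: pq)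
  then have "(p, q) \<in> eisenstein_units"
    by (simp only: norm_form_eq_1_iff[symmetric] of_int_eq_1_iff)
  then show "\<exists>k<6. u = v + omega^k"
    using unit_coords_omega_pow pq by (metis add_diff_cancel_left' diff_add_cancel)
next
  assume "\<exists>k<6. u = v + omega^k"
  then show "tri_adj v u"
    using assms tri_points_add tri_points_omega_pow by (auto simp: tri_adj_def dist_norm)
qed

lemma tri_adj_omega_pow:
  assumes "v \<in> tri_points" shows "tri_adj v (v + omega^k)"
  unfolding tri_adj_iff[OF assms] using omega_pow_mod_6[of k] by (intro exI[of _ "k mod 6"]) simp

lemma tri_adj_sym: "tri_adj u w \<Longrightarrow> tri_adj w u"
  by (auto simp: tri_adj_def dist_commute)

lemma tri_adj_consecutive:
  assumes "v \<in> tri_points" shows "tri_adj (v + omega^c) (v + omega^(c + 1))"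
proof -
  have "omega^c + omega^(c + 2) = omega^c + omega^c * (omega - 1)"
    by (simp only: power_add omega_squared)
  also have "\<dots> = omega^(c + 1)"
    by (simp add: algebra_simps)
  finally have "omega^c + omega^(c + 2) = omega^(c + 1)" .
  then have "v + omega^(c + 1) = (v + omega^c) + omega^(c + 2)"
    by (simp add: add.assoc)
  then show ?thesis
    using tri_adj_omega_pow[OF tri_points_add[OF assms tri_points_omega_pow]] by metis
qed

section \<open>Edges and the drawing\<close>

lemma unit_edge_meeting_coords:
  fixes p q e1 e2 :: int and s t :: real
  assumes "(e1, e2) \<in> eisenstein_units" and "0 < s" "s \<le> 1" "0 \<le> t" "t \<le> 1"
    and "p = s - t * e1" "q = - t * e2"
  shows "(p, q) = (1, 0) \<or> (p, q) = (1 - e1, - e2)"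
proof -
  have "p \<in> {-1, 0, 1, 2}" "q \<in> {-1, 0, 1}"
    using assms by (auto simp: eisenstein_units_def)
  then show ?thesis using assms by (auto simp: eisenstein_units_def)
qed

lemma lattice_edges_meet_1:
  assumes "a \<in> tri_points" "b \<in> tri_points" "0 < s" "s \<le> 1" "0 \<le> t" "t \<le> 1"
    and meet: "a + of_real s = b + of_real t * omega^k"
  shows "b = a + 1 \<or> b + omega^k = a + 1"
proof -
  obtain p q :: int where pq: "b - a = lat p q"
    using tri_points_diff[OF assms(2,1)] by (auto simp: tri_points_iff)
  obtain e1 e2 where e: "(e1, e2) \<in> eisenstein_units" "omega^k = lat e1 e2"
    by (rule omega_pow_unit_coords)
  have "lat p q = of_real s - of_real t * omega^k"
    using meet pq by (simp add: algebra_simps)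
  also have "\<dots> = lat (s - t * e1) (- t * e2)"
    by (simp add: e(2) lat_scale lat_def algebra_simps)
  finally have "p = s - t * e1" "q = - t * e2" by (simp_all add: lat_eq_iff)
  from unit_edge_meeting_coords[OF e(1) assms(3-6) this]
  have "b - a = lat 1 0 \<or> b - a = lat 1 0 - lat e1 e2"
    using pq by (auto simp: lat_diff)
  then have "b - a = 1 \<or> b - a = 1 - omega^k"
    by (simp add: lat_def e(2))
  then show ?thesis by (auto simp: algebra_simps)
qed

text \<open>Grid edges meet only at common endpoints.\<close>
lemma lattice_edges_meet:
  assumes a: "a \<in> tri_points" and b: "b \<in> tri_points"
    and "0 < s" "s \<le> 1" "0 \<le> t" "t \<le> 1"
    and meet: "a + of_real s * omega^j = b + of_real t * omega^k"
  shows "b = a + omega^j \<or> b + omega^k = a + omega^j"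
proof -
  \<comment> \<open>rotating by r = omega^(-j) reduces to j = 0\<close>
  define r where "r = omega^(5 * j)"
  have "omega^j * r = omega^(6 * j)"
    unfolding r_def power_add[symmetric] by simp
  then have jr: "omega^j * r = 1" by (simp add: power_mult omega_pow_6)
  have "(a + of_real s * omega^j) * r = (b + of_real t * omega^k) * r"
    using meet by simp
  then have "a * r + of_real s = b * r + of_real t * omega^(k + 5 * j)"
    using jr by (simp add: r_def power_add algebra_simps)
  from lattice_edges_meet_1[OF tri_points_mult_omega_pow[OF a, of "5 * j"]
      tri_points_mult_omega_pow[OF b, of "5 * j"] assms(3-6) this[unfolded r_def]]
  have "b * r = a * r + 1 \<or> b * r + omega^(k + 5 * j) = a * r + 1"
    by (simp add: r_def)
  moreover have "z * r * omega^j = z" for z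
    using jr by (simp add: mult.assoc mult.commute[of r])
  moreover have "omega^(k + 5 * j) * omega^j = omega^k"
    using jr by (simp add: r_def power_add mult.assoc mult.commute[of "omega^(5 * j)"])
  ultimately show ?thesis
    by (metis distrib_right mult_1)
qed

lemma closed_segment_from_iff:
  "z \<in> closed_segment a (a + w) \<longleftrightarrow> (\<exists>t. 0 \<le> t \<and> t \<le> 1 \<and> z = a + of_real t * w)"
  by (auto simp: closed_segment_def scaleR_conv_of_real algebra_simps)

lemma edge_in_drawing:
  "u \<in> S \<Longrightarrow> w \<in> S \<Longrightarrow> tri_adj u w \<Longrightarrow> closed_segment u w \<subseteq> drawing S"
  by (auto simp: drawing_def)

lemma half_edge_avoids_drawing:
  assumes S: "S \<subseteq> tri_points" and v: "v \<in> tri_points" and gap: "v + omega^k \<notin> S"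
    and z: "z \<in> closed_segment v (v + omega^k)" "z \<noteq> v"
  shows "z \<notin> drawing S"
proof
  obtain s where s: "0 \<le> s" "s \<le> 1" "z = v + of_real s * omega^k"
    using z(1) closed_segment_from_iff by blast
  with z(2) have "0 < s" by (cases "s = 0") auto
  assume "z \<in> drawing S"
  then consider "z \<in> S" | u w where "u \<in> S" "w \<in> S" "tri_adj u w" "z \<in> closed_segment u w"
    by (auto simp: drawing_def)
  then show False
  proof cases
    case 1
    have "v + of_real s * omega^k = z + of_real 0 * omega^k" using s by simp
    from lattice_edges_meet[OF v _ \<open>0 < s\<close> \<open>s \<le> 1\<close> _ _ this] 1 S gap z(2)
    show False by auto
  next
    case 2
    then obtain j where w: "w = u + omega^j"
      using S tri_adj_iff by blast
    then obtain t where t: "0 \<le> t" "t \<le> 1" "z = u + of_real t * omega^j"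
      using 2(4) closed_segment_from_iff by blast
    have "v + of_real s * omega^k = u + of_real t * omega^j" using s(3) t(3) by simp
    moreover have "u \<in> tri_points" using 2 S by auto
    ultimately have "u = v + omega^k \<or> u + omega^j = v + omega^k"
      using lattice_edges_meet[OF v _ \<open>0 < s\<close> \<open>s \<le> 1\<close> t(1,2)] by blast
    with 2 gap w show False by auto
  qed
qed

lemma lattice_point_notin_drawing:
  assumes "S \<subseteq> tri_points" "p \<in> tri_points" "p \<notin> S"
  shows "p \<notin> drawing S"
proof -
  have "p - 1 \<in> tri_points" using assms(2) tri_points_diff tri_points_omega_pow[of 0] by auto
  then show ?thesis
    using half_edge_avoids_drawing[OF assms(1), of "p - 1" 0 p] assms(3) by simp
qed

lemma gap_line_avoids_drawing:
  assumes S: "S \<subseteq> tri_points" and v: "v \<in> tri_points" "v \<notin> S"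
    and gaps: "v + omega^k \<notin> S" "v - omega^k \<notin> S"
  shows "closed_segment (v - omega^k) (v + omega^k) \<inter> drawing S = {}"
proof -
  have edge: "closed_segment v (v + omega^j) \<inter> drawing S = {}" if "v + omega^j \<notin> S" for j
    using half_edge_avoids_drawing[OF S v(1)] lattice_point_notin_drawing[OF S v] that by blast
  have minus: "v - omega^k = v + omega^(k + 3)" by (simp add: omega_pow_add_3)
  have "closed_segment v (v - omega^k) \<inter> drawing S = {}"
    unfolding minus by (rule edge) (use gaps(2) minus in simp)
  moreover have "closed_segment v (v + omega^k) \<inter> drawing S = {}"
    by (rule edge[OF gaps(1)])
  moreover have mid: "v \<in> closed_segment (v - omega^k) (v + omega^k)"
    using midpoint_in_closed_segment[of "v - omega^k" "v + omega^k"] by (simp add: midpoint_def)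
  have "closed_segment (v - omega^k) v \<union> closed_segment v (v + omega^k)
      = closed_segment (v - omega^k) (v + omega^k)"
    by (rule Un_closed_segment[OF mid])
  ultimately show ?thesis
    by (metis Int_Un_distrib2 closed_segment_commute sup_bot.right_neutral)
qed

lemma missing_neighbour_imp_outer_boundary:
  assumes sc: "simply_connected_shape S" and v: "v \<in> S" and gap: "v + omega^k \<notin> S"
  shows "v \<in> outer_boundary S"
proof -
  define p where "p = v + omega^k"
  define F where "F = connected_component_set (- drawing S) p"
  have S: "S \<subseteq> tri_points" using sc by (simp add: simply_connected_shape_def shape_def)
  then have p: "p \<in> tri_points" unfolding p_def using v tri_points_add tri_points_omega_pow by blast
  have half_edge: "closed_segment v p - {v} \<subseteq> - drawing S"
    using half_edge_avoids_drawing[OF S _ gap] v S by (auto simp: p_def)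
  moreover have "p \<in> closed_segment v p - {v}" by (simp add: p_def)
  ultimately have "p \<in> - drawing S" by blast
  then have face: "F \<in> faces S" and "p \<in> F"
    by (simp_all add: F_def faces_def componentsI)
  then have "\<not> bounded F"
    using sc p gap by (auto simp: simply_connected_shape_def is_hole_def p_def)
  then have outer: "is_outer_face S F" using face by (simp add: is_outer_face_def)
  have "v \<noteq> p" by (simp add: p_def)
  have "connected (open_segment v p)" by (simp add: convex_connected)
  moreover have "open_segment v p \<subseteq> closed_segment v p - {v}" by (auto simp: open_segment_def)
  moreover have "closed_segment v p - {v} \<subseteq> closure (open_segment v p)"
    using \<open>v \<noteq> p\<close> by auto
  ultimately have "connected (closed_segment v p - {v})"
    by (rule connected_intermediate_closure)
  then have "closed_segment v p - {v} \<subseteq> F"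
    unfolding F_def using half_edge by (intro connected_component_maximal) (auto simp: p_def)
  then have "closure (open_segment v p) \<subseteq> closure F"
    by (intro closure_mono) (auto simp: open_segment_def)
  then have "v \<in> closure F" using \<open>v \<noteq> p\<close> by auto
  moreover have "v \<notin> F" using v F_def connected_component_subset by (fastforce simp: drawing_def)
  ultimately have "v \<in> frontier F"
    using interior_subset[of F] by (auto simp: frontier_def)
  with outer v show ?thesis by (auto simp: outer_boundary_def)
qed

section \<open>Winding numbers around a wedge\<close>

lemma Re_Im_closed_segment:
  assumes "z \<in> closed_segment a b"
  obtains t where "0 \<le> t" "t \<le> 1"
    "Re z = (1 - t) * Re a + t * Re b" "Im z = (1 - t) * Im a + t * Im b"
  using assms by (auto simp: closed_segment_def)

lemma closed_segment_complex_of_real: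
  "a \<le> b \<Longrightarrow> closed_segment (complex_of_real a) (complex_of_real b) = complex_of_real ` {a..b}"
  by (simp add: closed_segment_of_real closed_segment_eq_real_ivl)

lemma complex_affine_image:
  fixes v u :: complex
  shows "closed_segment (v + u * a) (v + u * b) = (\<lambda>z. v + u * z) ` closed_segment a b"
    and "convex S \<Longrightarrow> convex ((\<lambda>z. v + u * z) ` S)"
proof -
  have lin: "linear ((*) u)"
    using bounded_linear_mult_right by (rule bounded_linear.linear)
  have img: "(\<lambda>z. v + u * z) ` S = (+) v ` ((*) u ` S)" for S
    by (simp add: image_image)
  show "closed_segment (v + u * a) (v + u * b) = (\<lambda>z. v + u * z) ` closed_segment a b"
    unfolding img closed_segment_translation closed_segment_linear_image[OF lin] ..
  show "convex S \<Longrightarrow> convex ((\<lambda>z. v + u * z) ` S)"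
    unfolding img by (intro convex_translation convex_linear_image[OF lin])
qed

lemma wedge_meets_reals:
  assumes "z \<in> closed_segment (cnj omega) 0 \<union> closed_segment 0 omega" "Im z = 0"
  shows "z = 0"
  using assms by (auto elim!: Re_Im_closed_segment simp: complex_eq_iff)

lemma Re_wedge_nonneg:
  assumes "z \<in> closed_segment (cnj omega) 0 \<union> closed_segment 0 omega \<union> closed_segment (cnj omega) omega"
  shows "0 \<le> Re z"
  using assms by (auto elim!: Re_Im_closed_segment)

lemma Re_chord: "z \<in> closed_segment (cnj omega) omega \<Longrightarrow> Re z = 1/2"
  by (erule Re_Im_closed_segment) (simp add: field_simps)

lemma Im_mult_cnj_scale: "Im ((u * a) * cnj (u * b)) = (cmod u)^2 * Im (a * cnj b)"
proof -
  have "Im ((u * a) * cnj (u * b)) = Im (of_real ((cmod u)^2) * (a * cnj b))"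
    by (simp only: complex_cnj_mult complex_norm_square mult_ac)
  also have "\<dots> = (cmod u)^2 * Im (a * cnj b)" by simp
  finally show ?thesis .
qed

lemma winding_number_split_at_chord:
  assumes P: "path P" "pathstart P = y" "pathfinish P = x"
    and z: "z \<notin> closed_segment x v" "z \<notin> closed_segment v y" "z \<notin> closed_segment x y"
      "z \<notin> path_image P"
  shows "winding_number (linepath x v +++ linepath v y +++ P) z =
      winding_number (linepath x v +++ linepath v y +++ linepath y x) z
      + winding_number (linepath x y +++ P) z"
proof -
  have "z \<notin> closed_segment y x" using z(3) by (simp add: closed_segment_commute)
  then have "winding_number (linepath y x) z = - winding_number (linepath x y) z"
    using z(3) winding_number_reversepath[of "linepath x y" z] by simp
  with P z \<open>z \<notin> closed_segment y x\<close> show ?thesis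
    by (simp add: winding_number_join path_image_join)
qed

lemma winding_number_wedge_triangle_inside:
  fixes v u :: complex
  assumes "u \<noteq> 0"
  shows "Re (winding_number (linepath (v + u * cnj omega) v +++ linepath v (v + u * omega)
      +++ linepath (v + u * omega) (v + u * cnj omega)) (v + u / 4)) < 0"
proof -
  define A where "A z = v + u * z" for z
  have diff: "A a - A b = u * (a - b)" for a b by (simp add: A_def algebra_simps)
  have side: "Re (winding_number (linepath (A a) (A b)) (A (1/4))) < 0
      \<and> A (1/4) \<notin> closed_segment (A a) (A b)"
    if "(a, b) \<in> {(cnj omega, 0), (0, omega), (omega, cnj omega)}" for a b
  proof -
    have "0 < Im ((a - b) * cnj (a - 1/4))" using that by (auto simp: omega_eq)
    then have pos: "0 < Im ((A a - A b) * cnj (A a - A (1/4)))"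
      unfolding diff Im_mult_cnj_scale using assms by simp
    then have "A (1/4) \<notin> closed_segment (A a) (A b)"
      by (simp add: closed_segment_def) (force simp: algebra_simps)
    with pos show ?thesis using winding_number_linepath_neg_lt by blast
  qed
  have "A 0 = v" "A (1/4) = v + u / 4" by (simp_all add: A_def)
  then show ?thesis
    using side[of "cnj omega" 0] side[of 0 omega] side[of omega "cnj omega"]
    by (simp add: A_def winding_number_join path_image_join)
qed

lemma winding_number_wedge_triangle_outside:
  fixes v u :: complex
  assumes "u \<noteq> 0"
  shows "winding_number (linepath (v + u * cnj omega) v +++ linepath v (v + u * omega)
      +++ linepath (v + u * omega) (v + u * cnj omega)) (v - u) = 0"
proof (rule winding_number_zero_outside)
  define A where "A z = v + u * z" for z
  have A_seg: "closed_segment (A a) (A b) = A ` closed_segment a b" for a b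
    unfolding A_def by (rule complex_affine_image)
  show "convex (A ` {z. 0 \<le> Re z})"
    unfolding A_def by (rule complex_affine_image(2)) (rule convex_halfspace_Re_ge)
  have "A 0 = v" by (simp add: A_def)
  then show "path_image (linepath (v + u * cnj omega) v +++ linepath v (v + u * omega)
      +++ linepath (v + u * omega) (v + u * cnj omega)) \<subseteq> A ` {z. 0 \<le> Re z}"
    using Re_wedge_nonneg
    by (auto simp: path_image_join A_seg[of "cnj omega" 0, unfolded A_def, simplified]
        A_seg[of 0 omega, unfolded A_def, simplified] A_seg[of omega "cnj omega", unfolded A_def]
        A_def closed_segment_commute[of omega])
  show "v - u \<notin> A ` {z. 0 \<le> Re z}"
  proof
    assume "v - u \<in> A ` {z. 0 \<le> Re z}"
    then obtain z where z: "0 \<le> Re z" "v - u = A z" by blast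
    then have "u * z = u * (-1)" by (simp add: A_def)
    then have "z = -1" using assms mult_left_cancel by blast
    with z(1) show False by simp
  qed
qed auto

lemma wedge_avoiding_segments:
  shows "closed_segment (1/4) 1 \<inter> (closed_segment (cnj omega) 0 \<union> closed_segment 0 omega) = {}"
    and "closed_segment (-1) (1/4) \<inter> closed_segment (cnj omega) omega = {}"
    and "closed_segment (-1) (1/4) \<union> closed_segment (1/4) 1 = closed_segment (-1) (1::complex)"
proof -
  have "z \<notin> closed_segment (cnj omega) 0 \<union> closed_segment 0 omega" if z: "z \<in> closed_segment (1/4) 1" for z
  proof -
    obtain t where "0 \<le> t" "Re z = (1 - t) * (1/4) + t" "Im z = 0"
      using Re_Im_closed_segment[OF z] by auto
    then have "Im z = 0" "1/4 \<le> Re z" by (simp_all add: field_simps)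
    then show ?thesis using wedge_meets_reals by force
  qed
  then show "closed_segment (1/4) 1 \<inter> (closed_segment (cnj omega) 0 \<union> closed_segment 0 omega) = {}"
    by blast
  have "z \<notin> closed_segment (cnj omega) omega" if z: "z \<in> closed_segment (-1) (1/4)" for z
  proof -
    obtain t where "t \<le> 1" "Re z = (1 - t) * (-1) + t * (1/4)"
      using Re_Im_closed_segment[OF z] by auto
    then have "Re z \<le> 1/4" by (simp add: field_simps)
    then show ?thesis using Re_chord by force
  qed
  then show "closed_segment (-1) (1/4) \<inter> closed_segment (cnj omega) omega = {}"
    by blast
  have "complex_of_real (1/4) \<in> complex_of_real ` {-1..1}" by (rule imageI) simp
  then have "1/4 \<in> closed_segment (-1) (1::complex)"
    using closed_segment_complex_of_real[of "-1" 1] by simp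
  then show "closed_segment (-1) (1/4) \<union> closed_segment (1/4) 1 = closed_segment (-1) (1::complex)"
    by (rule Un_closed_segment)
qed

lemma wedge_loop_avoids_segments:
  fixes v u :: complex
  defines "x \<equiv> v + u * cnj omega" and "y \<equiv> v + u * omega"
  assumes u: "u \<noteq> 0" and avoid: "K \<inter> closed_segment (v - u) (v + u) = {}"
  shows "closed_segment (v + u / 4) (v + u) \<inter> (closed_segment x v \<union> closed_segment v y \<union> K) = {}"
    and "closed_segment (v - u) (v + u / 4) \<inter> (closed_segment x y \<union> K) = {}"
    and "v - u \<notin> closed_segment x v \<union> closed_segment v y"
proof -
  define A where "A z = v + u * z" for z
  have "inj A" using u by (simp add: A_def inj_def)
  have A_seg: "closed_segment (A a) (A b) = A ` closed_segment a b" for a b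
    unfolding A_def by (rule complex_affine_image)
  have pts: "A 0 = v" "A (1/4) = v + u / 4" "A 1 = v + u" "A (-1) = v - u"
    "A (cnj omega) = x" "A omega = y"
    by (simp_all add: A_def x_def y_def)
  have "A ` closed_segment (-1) (1/4) \<union> A ` closed_segment (1/4) 1 = A ` closed_segment (-1) 1"
    by (simp only: image_Un[symmetric] wedge_avoiding_segments(3))
  also have "\<dots> = closed_segment (v - u) (v + u)"
    by (simp only: A_seg[symmetric] pts)
  finally have K: "K \<inter> A ` closed_segment (-1) (1/4) = {}" "K \<inter> A ` closed_segment (1/4) 1 = {}"
    using avoid by auto
  have "A ` closed_segment (1/4) 1 \<inter> (A ` closed_segment (cnj omega) 0 \<union> A ` closed_segment 0 omega) = {}"
    by (simp only: image_Un[symmetric] image_Int[OF \<open>inj A\<close>, symmetric] wedge_avoiding_segments(1)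
        image_empty)
  with K(2) have "closed_segment (A (1/4)) (A 1)
      \<inter> (closed_segment (A (cnj omega)) (A 0) \<union> closed_segment (A 0) (A omega) \<union> K) = {}"
    unfolding A_seg by blast
  then show "closed_segment (v + u / 4) (v + u) \<inter> (closed_segment x v \<union> closed_segment v y \<union> K) = {}"
    by (simp only: pts)
  have "A ` closed_segment (-1) (1/4) \<inter> A ` closed_segment (cnj omega) omega = {}"
    by (simp only: image_Int[OF \<open>inj A\<close>, symmetric] wedge_avoiding_segments(2) image_empty)
  with K(1) have "closed_segment (A (-1)) (A (1/4)) \<inter> (closed_segment (A (cnj omega)) (A omega) \<union> K) = {}"
    unfolding A_seg by blast
  then show "closed_segment (v - u) (v + u / 4) \<inter> (closed_segment x y \<union> K) = {}"
    by (simp only: pts)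
  have "-1 \<notin> closed_segment (cnj omega) 0 \<union> closed_segment 0 omega"
    using wedge_meets_reals[of "-1"] by auto
  then have "A (-1) \<notin> closed_segment (A (cnj omega)) (A 0) \<union> closed_segment (A 0) (A omega)"
    unfolding A_seg image_Un[symmetric] inj_image_mem_iff[OF \<open>inj A\<close>] .
  then show "v - u \<notin> closed_segment x v \<union> closed_segment v y"
    by (simp only: pts not_False_eq_True)
qed

text \<open>The segment from v - u to v + u crosses the loop only at its corner v.  The loop is the sum
of the triangle on the wedge, which winds around v + u/4 but not around v - u, and of the loop
formed by the chord of the wedge and P, which separates neither v + u from v + u/4 nor v + u/4
from v - u.\<close>
lemma winding_number_jumps_across_wedge:
  fixes v u :: complex and P :: "real \<Rightarrow> complex"
  assumes u: "u \<noteq> 0" and P: "path P" "pathstart P = v + u * omega" "pathfinish P = v + u * cnj omega"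
    and avoid: "path_image P \<inter> closed_segment (v - u) (v + u) = {}"
  shows "winding_number (linepath (v + u * cnj omega) v +++ linepath v (v + u * omega) +++ P) (v + u)
       \<noteq> winding_number (linepath (v + u * cnj omega) v +++ linepath v (v + u * omega) +++ P) (v - u)"
proof -
  define x where "x = v + u * cnj omega"
  define y where "y = v + u * omega"
  define \<gamma> where "\<gamma> = linepath x v +++ linepath v y +++ P"
  define T where "T = linepath x v +++ linepath v y +++ linepath y x"
  define \<rho> where "\<rho> = linepath x y +++ P"
  note seg = wedge_loop_avoids_segments[OF u avoid, folded x_def y_def]
  have ends: "pathstart P = y" "pathfinish P = x" using P by (simp_all add: x_def y_def)
  have loops: "path \<gamma>" "pathfinish \<gamma> = pathstart \<gamma>" "path \<rho>" "pathfinish \<rho> = pathstart \<rho>"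
    using P(1) ends by (simp_all add: \<gamma>_def \<rho>_def)
  have images: "path_image \<gamma> = closed_segment x v \<union> closed_segment v y \<union> path_image P"
    "path_image \<rho> = closed_segment x y \<union> path_image P"
    using ends by (auto simp: \<gamma>_def \<rho>_def path_image_join)
  have \<gamma>_outer: "winding_number \<gamma> (v + u) = winding_number \<gamma> (v + u / 4)"
    by (rule winding_number_eq[OF loops(1,2), where S = "closed_segment (v + u / 4) (v + u)"])
      (use seg(1) in \<open>simp_all add: images Int_commute\<close>)
  have \<rho>_inner: "winding_number \<rho> (v + u / 4) = winding_number \<rho> (v - u)"
    by (rule winding_number_eq[OF loops(3,4), where S = "closed_segment (v - u) (v + u / 4)"])
      (use seg(2) in \<open>simp_all add: images Int_commute\<close>)
  have "v + u / 4 \<in> closed_segment (v + u / 4) (v + u)" "v + u / 4 \<in> closed_segment (v - u) (v + u / 4)"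
    "v - u \<in> closed_segment (v - u) (v + u / 4)"
    by simp_all
  then have "winding_number \<gamma> (v + u / 4) = winding_number T (v + u / 4) + winding_number \<rho> (v + u / 4)"
    and "winding_number \<gamma> (v - u) = winding_number T (v - u) + winding_number \<rho> (v - u)"
    unfolding \<gamma>_def T_def \<rho>_def using seg
    by (auto intro!: winding_number_split_at_chord[OF P(1) ends])
  moreover have "Re (winding_number T (v + u / 4)) < 0" "winding_number T (v - u) = 0"
    using winding_number_wedge_triangle_inside[OF u, of v] winding_number_wedge_triangle_outside[OF u, of v]
    by (simp_all add: T_def x_def y_def)
  ultimately have "winding_number \<gamma> (v + u) \<noteq> winding_number \<gamma> (v - u)"
    using \<gamma>_outer \<rho>_inner by auto
  then show ?thesis by (simp add: \<gamma>_def x_def y_def)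
qed

definition grid_edges :: "complex set \<Rightarrow> (complex \<times> complex) set" where
  "grid_edges A = {(u, w). u \<in> A \<and> w \<in> A \<and> tri_adj u w}"

lemma induced_connected_iff: "induced_connected A \<longleftrightarrow> (\<forall>x\<in>A. \<forall>y\<in>A. (x, y) \<in> (grid_edges A)\<^sup>*)"
  by (simp add: induced_connected_def grid_edges_def)

lemma grid_edges_rtrancl_sym: "(a, b) \<in> (grid_edges A)\<^sup>* \<Longrightarrow> (b, a) \<in> (grid_edges A)\<^sup>*"
  using sym_rtrancl[of "grid_edges A"] tri_adj_sym
  by (auto simp: sym_def grid_edges_def)

lemma grid_edges_rtrancl_mem: "(a, b) \<in> (grid_edges A)\<^sup>* \<Longrightarrow> a \<in> A \<Longrightarrow> b \<in> A"
  by (induction rule: rtrancl_induct) (auto simp: grid_edges_def)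

lemma induced_connected_insert:
  assumes conn: "induced_connected A" and a: "a \<in> A" "tri_adj a b"
  shows "induced_connected (insert b A)"
proof -
  let ?R = "grid_edges (insert b A)"
  have "(grid_edges A)\<^sup>* \<subseteq> ?R\<^sup>*"
    by (rule rtrancl_mono) (auto simp: grid_edges_def)
  then have A_conn: "(x, y) \<in> ?R\<^sup>*" if "x \<in> A" "y \<in> A" for x y
    using conn that unfolding induced_connected_iff by blast
  have "(a, b) \<in> ?R" "(b, a) \<in> ?R"
    using a tri_adj_sym by (auto simp: grid_edges_def)
  then have "(x, b) \<in> ?R\<^sup>*" "(b, x) \<in> ?R\<^sup>*" if "x \<in> A" for x
    using A_conn[OF that a(1)] A_conn[OF a(1) that]
    by (auto intro: rtrancl_into_rtrancl converse_rtrancl_into_rtrancl)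
  then show ?thesis
    using A_conn unfolding induced_connected_iff by blast
qed

lemma induced_connected_reach:
  assumes "x \<in> A" shows "induced_connected ((grid_edges A)\<^sup>* `` {x})"
proof -
  let ?C = "(grid_edges A)\<^sup>* `` {x}"
  have "(x, w) \<in> (grid_edges ?C)\<^sup>*" if "(x, w) \<in> (grid_edges A)\<^sup>*" for w
    using that
  proof (induction rule: rtrancl_induct)
    case (step a b)
    have "(x, b) \<in> (grid_edges A)\<^sup>*" using step.hyps by (rule rtrancl_into_rtrancl)
    with step.hyps have "(a, b) \<in> grid_edges ?C" by (auto simp: grid_edges_def)
    with step.IH show ?case by simp
  qed simp
  then show ?thesis
    unfolding induced_connected_iff by (blast intro: rtrancl_trans grid_edges_rtrancl_sym)
qed

lemma grid_path_in_drawing: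
  assumes "(a, b) \<in> (grid_edges A)\<^sup>*" "a \<in> A"
  obtains g where "path g" "pathstart g = a" "pathfinish g = b" "path_image g \<subseteq> drawing A"
proof -
  from assms have "\<exists>g. path g \<and> pathstart g = a \<and> pathfinish g = b \<and> path_image g \<subseteq> drawing A"
  proof (induction rule: rtrancl_induct)
    case base
    then show ?case
      by (intro exI[of _ "\<lambda>t. a"]) (auto simp: path_const pathstart_def pathfinish_def drawing_def)
  next
    case (step y z)
    then obtain g where "path g" "pathstart g = a" "pathfinish g = y" "path_image g \<subseteq> drawing A"
      by blast
    moreover have "closed_segment y z \<subseteq> drawing A"
      using step(2) edge_in_drawing by (auto simp: grid_edges_def)
    ultimately show ?case
      by (intro exI[of _ "g +++ linepath y z"]) (auto simp: path_image_join)
  qed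
  then show ?thesis using that by blast
qed

section \<open>Wedges separate simply connected shapes\<close>

lemma winding_around_lattice_point_imp_hole:
  assumes S: "S \<subseteq> tri_points" and \<gamma>: "path \<gamma>" "pathfinish \<gamma> = pathstart \<gamma>"
    "path_image \<gamma> \<subseteq> drawing S"
    and p: "p \<in> tri_points" "p \<notin> S" and wn: "winding_number \<gamma> p \<noteq> 0"
  shows "is_hole S (connected_component_set (- drawing S) p)"
proof -
  have "p \<notin> drawing S" using lattice_point_notin_drawing[OF S p] .
  have "p \<notin> outside (path_image \<gamma>)"
    using winding_number_zero_in_outside[OF \<gamma>(1,2)] wn by blast
  then have "bounded (connected_component_set (- path_image \<gamma>) p)"
    by (simp add: outside)
  moreover have "connected_component_set (- drawing S) p \<subseteq> connected_component_set (- path_image \<gamma>) p"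
    using \<gamma>(3) by (intro connected_component_mono) auto
  ultimately show ?thesis
    using \<open>p \<notin> drawing S\<close> p bounded_subset
    by (auto simp: is_hole_def faces_def componentsI intro!: bexI[of _ p])
qed

text \<open>The only consequence of simple connectivity used in the induction below; it passes directly
to the branches of a shape at a point.\<close>
definition wedge_separation :: "complex set \<Rightarrow> bool" where
  "wedge_separation S \<longleftrightarrow> (\<forall>v a. v \<in> S \<and> v + omega^a \<in> S \<and> v + omega^(a + 2) \<in> S
     \<and> v + omega^(a + 1) \<notin> S \<and> v + omega^(a + 4) \<notin> S
     \<longrightarrow> (v + omega^a, v + omega^(a + 2)) \<notin> (grid_edges (S - {v}))\<^sup>*)"

lemma simply_connected_imp_wedge_separation:
  assumes sc: "simply_connected_shape S"
  shows "wedge_separation S"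
  unfolding wedge_separation_def
proof (intro allI impI notI)
  fix v a
  assume pattern: "v \<in> S \<and> v + omega^a \<in> S \<and> v + omega^(a + 2) \<in> S
     \<and> v + omega^(a + 1) \<notin> S \<and> v + omega^(a + 4) \<notin> S"
    and joined: "(v + omega^a, v + omega^(a + 2)) \<in> (grid_edges (S - {v}))\<^sup>*"
  have S: "S \<subseteq> tri_points" using sc by (simp add: simply_connected_shape_def shape_def)
  then have v: "v \<in> tri_points" using pattern by auto
  define u where "u = omega^(a + 1)"
  define x where "x = v + omega^a"
  define y where "y = v + omega^(a + 2)"
  have ux: "v + u * cnj omega = x" and uy: "v + u * omega = y"
    unfolding u_def x_def y_def wedge_directions by simp_all
  obtain g where g: "path g" "pathstart g = x" "pathfinish g = y" "path_image g \<subseteq> drawing (S - {v})"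
    using grid_path_in_drawing[OF joined] pattern by (auto simp: x_def y_def)
  define P where "P = reversepath g"
  have P: "path P" "pathstart P = v + u * omega" "pathfinish P = v + u * cnj omega"
    using g by (simp_all add: P_def ux uy)
  have "v + omega^(a + 1) \<notin> S - {v}" "v - omega^(a + 1) \<notin> S - {v}"
    using pattern unfolding wedge_directions(3) by auto
  then have "closed_segment (v - u) (v + u) \<inter> drawing (S - {v}) = {}"
    unfolding u_def using S v by (intro gap_line_avoids_drawing) auto
  then have avoid: "path_image P \<inter> closed_segment (v - u) (v + u) = {}"
    using g(4) by (auto simp: P_def)
  define \<gamma> where "\<gamma> = linepath x v +++ linepath v y +++ P"
  have "winding_number \<gamma> (v + u) \<noteq> winding_number \<gamma> (v - u)"
    using winding_number_jumps_across_wedge[OF _ P avoid] unfolding \<gamma>_def ux uy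
    by (simp add: u_def)
  then obtain k where k: "winding_number \<gamma> (v + omega^k) \<noteq> 0" "v + omega^k \<notin> S"
    using pattern wedge_directions(3)[of v a] by (metis u_def)
  have "closed_segment v x \<subseteq> drawing S" "closed_segment v y \<subseteq> drawing S"
    using edge_in_drawing[OF _ _ tri_adj_omega_pow[OF v]] pattern unfolding x_def y_def by blast+
  moreover have "drawing (S - {v}) \<subseteq> drawing S" by (auto simp: drawing_def)
  ultimately have "path_image \<gamma> \<subseteq> drawing S"
    using g(4) P by (auto simp: \<gamma>_def path_image_join P_def ux uy closed_segment_commute[of x v])
  moreover have "path \<gamma>" "pathfinish \<gamma> = pathstart \<gamma>" using P by (simp_all add: \<gamma>_def ux uy)
  moreover have "v + omega^k \<in> tri_points" using v tri_points_add tri_points_omega_pow by blast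
  ultimately have "is_hole S (connected_component_set (- drawing S) (v + omega^k))"
    using winding_around_lattice_point_imp_hole[OF S] k by blast
  then show False using sc by (auto simp: simply_connected_shape_def)
qed

lemma add_mod_6_inject:
  fixes i j j' :: nat
  assumes "j < 6" "j' < 6" "(i + j) mod 6 = (i + j') mod 6"
  shows "j = j'"
proof -
  obtain q q' where "i + j + 6 * q = i + j' + 6 * q'"
    using assms(3) by (auto simp: nat_mod_eq_iff)
  then have "(j + 6 * q) mod 6 = (j' + 6 * q') mod 6" by simp
  with assms(1,2) show ?thesis by simp
qed

lemma mem_cyc_interval: "k \<in> cyc_interval i m \<longleftrightarrow> (\<exists>j<m. k = (i + j) mod 6)"
  by (auto simp: cyc_interval_def)

lemma cyc_interval_0 [simp]: "cyc_interval i 0 = {}"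
  by (simp add: cyc_interval_def)

lemma cyc_interval_Suc: "cyc_interval i (Suc m) = insert ((i + m) mod 6) (cyc_interval i m)"
  by (auto simp: mem_cyc_interval less_Suc_eq)

lemma cyc_interval_3: "cyc_interval i 3 = {i mod 6, (i + 1) mod 6, (i + 2) mod 6}"
  by (simp add: numeral_3_eq_3 cyc_interval_Suc insert_commute)

lemma cyc_interval_mod: "cyc_interval (i mod 6) m = cyc_interval i m"
  by (simp add: cyc_interval_def mod_add_left_eq)

lemma cyc_interval_add: "cyc_interval i (m + n) = cyc_interval i m \<union> cyc_interval (i + m) n"
proof (intro set_eqI iffI)
  fix k assume "k \<in> cyc_interval i (m + n)"
  then obtain j where j: "j < m + n" "k = (i + j) mod 6" by (auto simp: mem_cyc_interval)
  show "k \<in> cyc_interval i m \<union> cyc_interval (i + m) n"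
  proof (cases "j < m")
    case False
    then have "k = (i + m + (j - m)) mod 6" "j - m < n" using j by simp_all
    then show ?thesis by (auto simp: mem_cyc_interval)
  qed (use j in \<open>auto simp: mem_cyc_interval\<close>)
next
  fix k assume "k \<in> cyc_interval i m \<union> cyc_interval (i + m) n"
  then show "k \<in> cyc_interval i (m + n)"
  proof
    assume "k \<in> cyc_interval i m"
    then obtain j where "j < m" "k = (i + j) mod 6" by (auto simp: mem_cyc_interval)
    then show ?thesis unfolding mem_cyc_interval by (intro exI[of _ j]) simp
  next
    assume "k \<in> cyc_interval (i + m) n"
    then obtain j where "j < n" "k = (i + m + j) mod 6" by (auto simp: mem_cyc_interval)
    then show ?thesis unfolding mem_cyc_interval by (intro exI[of _ "m + j"]) (simp add: add.assoc)
  qed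
qed

lemma card_cyc_interval:
  assumes "m \<le> 6" shows "card (cyc_interval i m) = m"
proof -
  have "cyc_interval i m = (\<lambda>j. (i + j) mod 6) ` {..<m}"
    by (auto simp: cyc_interval_def)
  moreover have "inj_on (\<lambda>j. (i + j) mod 6) {..<m}"
    using assms by (intro inj_onI) (rule add_mod_6_inject, auto)
  ultimately show ?thesis by (simp add: card_image)
qed

lemma cyc_interval_subset: "cyc_interval i m \<subseteq> {..<6}"
  by (auto simp: cyc_interval_def)

lemma cyc_interval_6: "cyc_interval i 6 = {..<6}"
  by (rule card_subset_eq) (simp_all add: card_cyc_interval cyc_interval_subset)

lemma cyc_interval_complement:
  assumes "m \<le> 6" shows "{..<6} - cyc_interval i m = cyc_interval (i + m) (6 - m)"
proof -
  let ?A = "cyc_interval i m" and ?B = "cyc_interval (i + m) (6 - m)"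
  have "{..<6} = ?A \<union> ?B"
    using cyc_interval_add[of i m "6 - m"] assms by (simp add: cyc_interval_6)
  moreover have "card ?A + card ?B = card (?A \<union> ?B) + card (?A \<inter> ?B)"
    using cyc_interval_subset by (intro card_Un_Int) (auto intro: finite_subset)
  ultimately have "card (?A \<inter> ?B) = 0"
    using assms by (simp add: card_cyc_interval flip: \<open>{..<6} = ?A \<union> ?B\<close>)
  moreover have "finite (?A \<inter> ?B)"
    using cyc_interval_subset by (auto intro: finite_subset)
  ultimately have "?A \<inter> ?B = {}" by simp
  with \<open>{..<6} = ?A \<union> ?B\<close> show ?thesis by blast
qed

lemma subset_of_3_cases:
  assumes "A \<subseteq> {x, y, z}" "A \<noteq> {}"
  shows "A = {x, y, z} \<or> A = {x, y} \<or> A = {y, z} \<or> A = {x} \<or> A = {y} \<or> A = {z} \<or> A = {x, z}"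
proof -
  define X where "X = (if x \<in> A then {x} else {}) \<union> (if y \<in> A then {y} else {})
      \<union> (if z \<in> A then {z} else {})"
  have "A = X" using assms(1) by (auto simp: X_def)
  then have "X \<noteq> {}" using assms(2) by simp
  then show ?thesis
    unfolding \<open>A = X\<close>
    by (cases "x \<in> A"; cases "y \<in> A"; cases "z \<in> A") (simp_all add: X_def insert_commute)
qed

lemma subset_cyc_interval_3_cases:
  assumes "A \<subseteq> cyc_interval i 3" "A \<noteq> {}"
  shows "(\<exists>j m. 0 < m \<and> m \<le> 3 \<and> A = cyc_interval j m) \<or> A = {i mod 6, (i + 2) mod 6}"
proof -
  have one: "cyc_interval j 1 = {j mod 6}" and two: "cyc_interval j 2 = {j mod 6, (j + 1) mod 6}" for j
    by (simp_all add: numeral_2_eq_2 cyc_interval_Suc insert_commute)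
  have "(i + 1) + 1 = i + 2" by simp
  then have "A = cyc_interval i 3 \<or> A = cyc_interval i 2 \<or> A = cyc_interval (i + 1) 2 \<or>
      A = cyc_interval i 1 \<or> A = cyc_interval (i + 1) 1 \<or> A = cyc_interval (i + 2) 1 \<or>
      A = {i mod 6, (i + 2) mod 6}"
    using subset_of_3_cases[OF assms(1)[unfolded cyc_interval_3] assms(2)]
    unfolding cyc_interval_3 one two by (simp only:)
  moreover have "0 < (1::nat)" "0 < (2::nat)" "0 < (3::nat)" "(1::nat) \<le> 3" "(2::nat) \<le> 3"
    by simp_all
  ultimately show ?thesis by blast
qed

section \<open>Arc points\<close>

definition nbr_dirs :: "complex set \<Rightarrow> complex \<Rightarrow> nat set" where
  "nbr_dirs S v = {k. k < 6 \<and> v + omega^k \<in> S}"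

lemma mem_nbr_dirs: "k mod 6 \<in> nbr_dirs S v \<longleftrightarrow> v + omega^k \<in> S"
  by (simp add: nbr_dirs_def omega_pow_mod_6)

lemma out_dirs_eq: "out_dirs S v = {..<6} - nbr_dirs S v"
  by (auto simp: out_dirs_def nbr_dirs_def)

lemma neighbours_eq:
  assumes "v \<in> tri_points" shows "{u \<in> S. tri_adj v u} = (\<lambda>k. v + omega^k) ` nbr_dirs S v"
  using tri_adj_iff[OF assms] by (auto simp: nbr_dirs_def)

definition arc_point :: "complex set \<Rightarrow> complex \<Rightarrow> bool" where
  "arc_point S v \<longleftrightarrow> v \<in> S \<and> (\<exists>i m. 0 < m \<and> m \<le> 3 \<and> nbr_dirs S v = cyc_interval i m)"

lemma induced_connected_arc:
  assumes v: "v \<in> tri_points"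
  shows "induced_connected ((\<lambda>k. v + omega^k) ` cyc_interval i m)"
proof (induction m)
  case 0
  then show ?case by (simp add: induced_connected_def)
next
  case (Suc m)
  show ?case
  proof (cases "m = 0")
    case True
    then show ?thesis by (simp add: cyc_interval_Suc induced_connected_def)
  next
    case False
    then obtain n where n: "m = Suc n" using not0_implies_Suc by blast
    then have "v + omega^((i + n) mod 6) \<in> (\<lambda>k. v + omega^k) ` cyc_interval i m"
      by (simp add: cyc_interval_Suc)
    moreover have "tri_adj (v + omega^((i + n) mod 6)) (v + omega^((i + m) mod 6))"
      using tri_adj_consecutive[OF v, of "i + n"] n by (simp add: omega_pow_mod_6)
    ultimately show ?thesis
      using induced_connected_insert[OF Suc.IH] by (simp add: cyc_interval_Suc)
  qed
qed

lemma arc_point_imp_sce: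
  assumes sc: "simply_connected_shape S" and arc: "arc_point S v"
  shows "sce S v"
proof -
  obtain i m where v: "v \<in> S" and m: "0 < m" "m \<le> 3" and dirs: "nbr_dirs S v = cyc_interval i m"
    using arc by (auto simp: arc_point_def)
  have vt: "v \<in> tri_points" using sc v by (auto simp: simply_connected_shape_def shape_def)
  define B where "B = out_dirs S v"
  have B: "B = cyc_interval ((i + m) mod 6) (6 - m)"
    using m by (simp add: B_def out_dirs_eq dirs cyc_interval_complement cyc_interval_mod)
  then have card_B: "card B = 6 - m" by (simp add: card_cyc_interval)
  have "redundant S v"
    using induced_connected_arc[OF vt] v by (simp add: redundant_def neighbours_eq[OF vt] dirs)
  moreover have "B \<noteq> {}" using card_B m by auto
  then have "v \<in> outer_boundary S"
    using missing_neighbour_imp_outer_boundary[OF sc v] by (auto simp: B_def out_dirs_def)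
  moreover have "local_boundary S v B"
    unfolding local_boundary_def
  proof (intro conjI allI impI)
    show "\<exists>i m. i < 6 \<and> 0 < m \<and> m \<le> 6 \<and> B = cyc_interval i m"
      using B m by (intro exI[of _ "(i + m) mod 6"] exI[of _ "6 - m"]) simp
    fix i' m' assume "i' < 6 \<and> m' \<le> 6 \<and> B \<subset> cyc_interval i' m'"
    then show "\<not> cyc_interval i' m' \<subseteq> out_dirs S v" by (auto simp: B_def)
  qed (use v in \<open>simp_all add: B_def\<close>)
  moreover have "boundary_count B > 0" using card_B m by (simp add: boundary_count_def)
  ultimately show ?thesis unfolding sce_def erodable_def by blast
qed

lemma Re_omega_pow_nonpos: "k < 6 \<Longrightarrow> Re (omega^k) \<le> 0 \<Longrightarrow> k \<in> cyc_interval 2 3"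
  and Re_omega_pow_nonneg: "k < 6 \<Longrightarrow> 0 \<le> Re (omega^k) \<Longrightarrow> k \<in> cyc_interval 5 3"
proof -
  assume "k < 6"
  then have "k \<in> {0, 1, 2, 3, 4, 5}" by auto
  then show "Re (omega^k) \<le> 0 \<Longrightarrow> k \<in> cyc_interval 2 3" "0 \<le> Re (omega^k) \<Longrightarrow> k \<in> cyc_interval 5 3"
    by (auto simp: cyc_interval_3 omega_pow_values)
qed

lemma nbr_dirs_at_max: "\<forall>w\<in>S. Re w \<le> Re v \<Longrightarrow> nbr_dirs S v \<subseteq> cyc_interval 2 3"
  using Re_omega_pow_nonpos by (fastforce simp: nbr_dirs_def)

lemma nbr_dirs_at_min: "\<forall>w\<in>S. Re v \<le> Re w \<Longrightarrow> nbr_dirs S v \<subseteq> cyc_interval 5 3"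
  using Re_omega_pow_nonneg by (fastforce simp: nbr_dirs_def)

lemma extreme_points_nbr_dirs:
  assumes "finite S" "S \<noteq> {}"
  obtains vmax vmin where "vmax \<in> S" "nbr_dirs S vmax \<subseteq> cyc_interval 2 3"
    and "vmin \<in> S" "nbr_dirs S vmin \<subseteq> cyc_interval 5 3"
proof -
  have "Max (Re ` S) \<in> Re ` S" "Min (Re ` S) \<in> Re ` S" using assms by simp_all
  then obtain vmax vmin where vmax: "vmax \<in> S" "Re vmax = Max (Re ` S)"
    and vmin: "vmin \<in> S" "Re vmin = Min (Re ` S)"
    by (metis imageE)
  have "\<forall>w\<in>S. Re w \<le> Re vmax" "\<forall>w\<in>S. Re vmin \<le> Re w"
    using assms(1) vmax vmin by simp_all
  with vmax(1) vmin(1) show ?thesis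
    using that nbr_dirs_at_max nbr_dirs_at_min by blast
qed

section \<open>Two arc points by induction\<close>

definition wedge_separated_shape :: "complex set \<Rightarrow> bool" where
  "wedge_separated_shape S \<longleftrightarrow> shape S \<and> induced_connected S \<and> 2 \<le> card S \<and> wedge_separation S"

lemma nbr_dirs_nonempty:
  assumes S: "wedge_separated_shape S" and v: "v \<in> S"
  shows "nbr_dirs S v \<noteq> {}"
proof -
  have "\<not> S \<subseteq> {v}"
    using S card_mono[of "{v}" S] by (auto simp: wedge_separated_shape_def)
  then obtain w where "w \<in> S" "w \<noteq> v" by blast
  then have "(v, w) \<in> (grid_edges S)\<^sup>*"
    using S v by (auto simp: wedge_separated_shape_def induced_connected_iff)
  then obtain y where "(v, y) \<in> grid_edges S"
    using \<open>w \<noteq> v\<close> by (auto elim: converse_rtranclE)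
  then obtain k where "k < 6" "v + omega^k \<in> S"
    using S tri_adj_iff[of v y] by (auto simp: grid_edges_def wedge_separated_shape_def shape_def)
  then show ?thesis by (auto simp: nbr_dirs_def)
qed

lemma branch_closed:
  assumes S: "S \<subseteq> tri_points" and v: "v \<in> S" and x: "x \<in> S - {v}"
    and C: "C = (grid_edges (S - {v}))\<^sup>* `` {x}" and w: "w \<in> C"
  shows "w + omega^k \<in> insert v C \<longleftrightarrow> w + omega^k \<in> S"
proof
  have w_S: "w \<in> S - {v}" using grid_edges_rtrancl_mem x w by (auto simp: C)
  assume wk: "w + omega^k \<in> S"
  have "tri_adj w (w + omega^k)" using w_S S by (auto intro: tri_adj_omega_pow)
  then have "w + omega^k \<noteq> v \<Longrightarrow> (w, w + omega^k) \<in> grid_edges (S - {v})"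
    using w_S wk by (auto simp: grid_edges_def)
  then show "w + omega^k \<in> insert v C"
    using w by (auto simp: C intro: rtrancl_into_rtrancl)
next
  assume "w + omega^k \<in> insert v C"
  moreover have "C \<subseteq> S" using grid_edges_rtrancl_mem x by (auto simp: C)
  ultimately show "w + omega^k \<in> S" using v by blast
qed

lemma wedge_separation_branch:
  assumes sep: "wedge_separation S" and S: "S \<subseteq> tri_points" and v: "v \<in> S" and x: "x \<in> S - {v}"
    and C: "C = (grid_edges (S - {v}))\<^sup>* `` {x}"
    and only_x: "\<And>w. w \<in> C \<Longrightarrow> tri_adj v w \<Longrightarrow> w = x"
  shows "wedge_separation (insert v C)"
  unfolding wedge_separation_def
proof (intro allI impI)
  fix w a
  assume pattern: "w \<in> insert v C \<and> w + omega^a \<in> insert v C \<and> w + omega^(a + 2) \<in> insert v C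
    \<and> w + omega^(a + 1) \<notin> insert v C \<and> w + omega^(a + 4) \<notin> insert v C"
  have C_sub: "C \<subseteq> S - {v}" using grid_edges_rtrancl_mem x by (auto simp: C)
  show "(w + omega^a, w + omega^(a + 2)) \<notin> (grid_edges (insert v C - {w}))\<^sup>*"
  proof (cases "w = v")
    case True
    have "v \<in> tri_points" using v S by auto
    moreover have "v + omega^a \<in> C" "v + omega^(a + 2) \<in> C" using pattern True by auto
    ultimately have "v + omega^a = x" "v + omega^(a + 2) = x"
      using only_x tri_adj_omega_pow by blast+
    then have "omega^(a + 2) = omega^a" by (metis add_left_cancel)
    then show ?thesis using omega_pow_add_2_neq by blast
  next
    case False
    with pattern have wC: "w \<in> C" by simp
    then have "w \<in> S \<and> w + omega^a \<in> S \<and> w + omega^(a + 2) \<in> S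
        \<and> w + omega^(a + 1) \<notin> S \<and> w + omega^(a + 4) \<notin> S"
      using pattern branch_closed[OF S v x C wC] C_sub by blast
    then have "(w + omega^a, w + omega^(a + 2)) \<notin> (grid_edges (S - {w}))\<^sup>*"
      using sep unfolding wedge_separation_def by blast
    moreover have "(grid_edges (insert v C - {w}))\<^sup>* \<subseteq> (grid_edges (S - {w}))\<^sup>*"
      using C_sub v by (intro rtrancl_mono) (auto simp: grid_edges_def)
    ultimately show ?thesis by blast
  qed
qed

lemma branch_wedge_separated_shape:
  assumes S: "wedge_separated_shape S" and v: "v \<in> S" and x: "x \<in> S - {v}" "tri_adj v x"
    and C: "C = (grid_edges (S - {v}))\<^sup>* `` {x}"
    and only_x: "\<And>w. w \<in> C \<Longrightarrow> tri_adj v w \<Longrightarrow> w = x"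
  shows "C \<subseteq> S - {v}" and "wedge_separated_shape (insert v C)"
proof -
  show C_sub: "C \<subseteq> S - {v}"
    using grid_edges_rtrancl_mem x by (auto simp: C)
  have S_tri: "S \<subseteq> tri_points" using S by (simp add: wedge_separated_shape_def shape_def)
  have "x \<in> C" by (simp add: C)
  have "induced_connected (insert v C)"
    using induced_connected_reach[of x "S - {v}"] x \<open>x \<in> C\<close> tri_adj_sym
    by (intro induced_connected_insert) (auto simp: C)
  moreover have "shape (insert v C)"
    using S C_sub v finite_subset by (auto simp: wedge_separated_shape_def shape_def)
  moreover have "2 \<le> card (insert v C)"
    using \<open>x \<in> C\<close> x \<open>shape (insert v C)\<close> card_mono[of "insert v C" "{v, x}"]
    by (auto simp: shape_def)
  moreover have "wedge_separation (insert v C)"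
    using S S_tri v x(1) C only_x by (intro wedge_separation_branch) (auto simp: wedge_separated_shape_def)
  ultimately show "wedge_separated_shape (insert v C)" by (simp add: wedge_separated_shape_def)
qed

lemma arc_point_in_branch:
  assumes IH: "\<And>S'. card S' < card S \<Longrightarrow> wedge_separated_shape S'
      \<Longrightarrow> \<exists>g1 g2. g1 \<noteq> g2 \<and> arc_point S' g1 \<and> arc_point S' g2"
    and S: "wedge_separated_shape S" and v: "v \<in> S"
    and p: "p \<in> S - {v}" "tri_adj v p"
    and q: "q \<in> S - {v}" "(p, q) \<notin> (grid_edges (S - {v}))\<^sup>*"
    and nbrs: "\<And>w. w \<in> S \<Longrightarrow> tri_adj v w \<Longrightarrow> w = p \<or> w = q"
  shows "\<exists>g \<in> (grid_edges (S - {v}))\<^sup>* `` {p}. arc_point S g"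
proof -
  define C where "C = (grid_edges (S - {v}))\<^sup>* `` {p}"
  have "q \<notin> C" using q by (simp add: C_def)
  have only_p: "w = p" if "w \<in> C" "tri_adj v w" for w
  proof -
    have "w \<in> S - {v}"
      using grid_edges_rtrancl_mem[of p w "S - {v}"] that(1) p(1) by (simp add: C_def)
    then have "w = p \<or> w = q" using nbrs that(2) by blast
    with that(1) \<open>q \<notin> C\<close> show "w = p" by blast
  qed
  note branch = branch_wedge_separated_shape[OF S v p C_def only_p]
  have "card (insert v C) < card S"
    using branch(1) v q \<open>q \<notin> C\<close> S
    by (intro psubset_card_mono) (auto simp: wedge_separated_shape_def shape_def)
  then obtain g1 g2 where "g1 \<noteq> g2" "arc_point (insert v C) g1" "arc_point (insert v C) g2"
    using IH branch(2) by blast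
  then obtain g where g: "g \<in> C" "arc_point (insert v C) g"
    by (metis arc_point_def insertE)
  have S_tri: "S \<subseteq> tri_points" using S by (simp add: wedge_separated_shape_def shape_def)
  have "nbr_dirs (insert v C) g = nbr_dirs S g"
    using branch_closed[OF S_tri v p(1) C_def g(1)] by (auto simp: nbr_dirs_def)
  then have "arc_point S g"
    using g branch(1) by (auto simp: arc_point_def)
  with g show ?thesis by (auto simp: C_def)
qed

lemma wedge_point_two_arc_points:
  assumes IH: "\<And>S'. card S' < card S \<Longrightarrow> wedge_separated_shape S'
      \<Longrightarrow> \<exists>g1 g2. g1 \<noteq> g2 \<and> arc_point S' g1 \<and> arc_point S' g2"
    and S: "wedge_separated_shape S" and v: "v \<in> S"
    and dirs: "nbr_dirs S v = {a mod 6, (a + 2) mod 6}"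
  shows "\<exists>g1 g2. g1 \<noteq> g2 \<and> arc_point S g1 \<and> arc_point S g2"
proof -
  define x where "x = v + omega^a"
  define y where "y = v + omega^(a + 2)"
  let ?R = "grid_edges (S - {v})"
  have vt: "v \<in> tri_points" using S v by (auto simp: wedge_separated_shape_def shape_def)
  have in_S: "v + omega^k \<in> S \<longleftrightarrow> k mod 6 = a mod 6 \<or> k mod 6 = (a + 2) mod 6" for k
    using mem_nbr_dirs[of k S v] dirs by auto
  have "(a + 1) mod 6 \<noteq> (a + 0) mod 6" "(a + 1) mod 6 \<noteq> (a + 2) mod 6"
    "(a + 4) mod 6 \<noteq> (a + 0) mod 6" "(a + 4) mod 6 \<noteq> (a + 2) mod 6"
    using add_mod_6_inject[where i = a and j = 1 and j' = 0] add_mod_6_inject[where i = a and j = 1 and j' = 2]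
      add_mod_6_inject[where i = a and j = 4 and j' = 0] add_mod_6_inject[where i = a and j = 4 and j' = 2]
    by auto
  then have gaps: "v + omega^(a + 1) \<notin> S" "v + omega^(a + 4) \<notin> S"
    unfolding in_S by simp_all
  have xy: "x \<in> S - {v}" "y \<in> S - {v}"
    using in_S[of a] in_S[of "a + 2"] by (auto simp: x_def y_def)
  have adj: "tri_adj v x" "tri_adj v y"
    unfolding x_def y_def by (rule tri_adj_omega_pow[OF vt])+
  have sep: "(x, y) \<notin> ?R\<^sup>*"
    using S v xy gaps by (auto simp: wedge_separated_shape_def wedge_separation_def x_def y_def)
  have nbrs: "w = x \<or> w = y" if w: "w \<in> S" "tri_adj v w" for w
  proof -
    obtain k where "k < 6" "w = v + omega^k" using w(2) tri_adj_iff[OF vt] by auto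
    then show ?thesis
      using w(1) in_S[of k] omega_pow_mod_6[of a] omega_pow_mod_6[of "a + 2"]
      by (auto simp: x_def y_def)
  qed
  obtain g1 where g1: "(x, g1) \<in> ?R\<^sup>*" "arc_point S g1"
    using arc_point_in_branch[OF IH S v xy(1) adj(1) xy(2) sep nbrs] by blast
  obtain g2 where g2: "(y, g2) \<in> ?R\<^sup>*" "arc_point S g2"
    using arc_point_in_branch[OF IH S v xy(2) adj(2) xy(1)] sep nbrs grid_edges_rtrancl_sym by blast
  have "g1 \<noteq> g2"
    using g1(1) g2(1) sep by (auto dest: grid_edges_rtrancl_sym intro: rtrancl_trans)
  with g1 g2 show ?thesis by blast
qed

lemma two_arc_points:
  "wedge_separated_shape S \<Longrightarrow> \<exists>g1 g2. g1 \<noteq> g2 \<and> arc_point S g1 \<and> arc_point S g2"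
proof (induction "card S" arbitrary: S rule: less_induct)
  case less
  have "finite S" "S \<noteq> {}"
    using less.prems by (auto simp: wedge_separated_shape_def shape_def)
  then obtain vmax vmin where vmax: "vmax \<in> S" "nbr_dirs S vmax \<subseteq> cyc_interval 2 3"
    and vmin: "vmin \<in> S" "nbr_dirs S vmin \<subseteq> cyc_interval 5 3"
    by (rule extreme_points_nbr_dirs)
  have ne: "nbr_dirs S vmax \<noteq> {}" "nbr_dirs S vmin \<noteq> {}"
    using vmax(1) vmin(1) nbr_dirs_nonempty[OF less.prems] by auto
  show ?case
  proof (cases "arc_point S vmax \<and> arc_point S vmin")
    case True
    have "vmax \<noteq> vmin"
    proof
      assume "vmax = vmin"
      then have "nbr_dirs S vmax \<subseteq> cyc_interval 2 3 \<inter> cyc_interval 5 3" using vmax vmin by blast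
      moreover have "cyc_interval 2 3 \<inter> cyc_interval 5 3 = {}" by (simp add: cyc_interval_3)
      ultimately show False using ne(1) by blast
    qed
    with True show ?thesis by blast
  next
    case False
    have "nbr_dirs S vmax = {2 mod 6, (2 + 2) mod 6} \<or> nbr_dirs S vmin = {5 mod 6, (5 + 2) mod 6}"
    proof (rule ccontr)
      assume "\<not> ?thesis"
      then have "arc_point S vmax" "arc_point S vmin"
        using subset_cyc_interval_3_cases[OF vmax(2) ne(1)] subset_cyc_interval_3_cases[OF vmin(2) ne(2)]
          vmax(1) vmin(1)
        unfolding arc_point_def by blast+
      with False show False by blast
    qed
    then show ?thesis
      using wedge_point_two_arc_points[OF less.hyps less.prems] vmax(1) vmin(1) by blast
  qed
qed

theorem proposition2p3:
  assumes "simply_connected_shape S" and "card S \<ge> 2"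
  shows "\<exists>v\<in>S. sce S v"
proof -
  have "wedge_separated_shape S"
    using assms simply_connected_imp_wedge_separation
    by (auto simp: wedge_separated_shape_def simply_connected_shape_def)
  then obtain v where "arc_point S v" using two_arc_points by blast
  then show ?thesis using arc_point_imp_sce[OF assms(1)] by (auto simp: arc_point_def)
qed

end
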